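(* Consider a Markov decision process with finite state space $\mathcal{S}$, finite action set $\mathcal{A}$, transition probabilities $p(\cdot\mid s,a)$, rewards $r:\mathcal{S}\times\mathcal{A}\to[0,1]$ with $r_{\max}=\max_{s,a}r(s,a)$, and discount factor $\gamma\in(0,1)$. Let $Q^*$ be the unique fixed point of $\mathcal{T}Q(s,a)=\sum_{s'}p(s'\mid s,a)\bigl(r(s,a)+\gamma\max_{a'}Q(s',a')\bigr)$. Consider the algorithm: given $Q^0$ with $\|Q^0\|_\infty\le\frac{r_{\max}}{1-\gamma}$ and a number of iterations $N$, for $n=1,\dots,N$ set $k_n=\lceil n^2\gamma^{N-n}\rceil$, for every $(s,a)$ draw independent samples $s_1(s,a),\dots,s_{k_n}(s,a)\sim p(\cdot\mid s,a)$, compute $$\hat{\mathcal{T}}_nQ^{n-1}(s,a)=r(s,a)+\gamma\frac{1}{k_n}\sum_{i=1}^{k_n}\max_{a'\in\mathcal{A}}Q^{n-1}(s_i(s,a),a'),$$ and set $Q^n=(1-\beta_n)Q^0+\beta_n\hat{\mathcal{T}}_nQ^{n-1}$ with $\beta_n=\frac{n}{n+1}$. Then, given $\varepsilon>0$, the algorithm produces an iterate $Q^N$ with $\mathbb{E}(\|Q^N-Q^*\|_\infty)\le\varepsilon$ using at most $\tilde O\!\left(\frac{|\mathcal{S}\times\mathcal{A}|\,r_{\max}^2}{\varepsilon^2(1-\gamma)^5}\right)$ queries to the stochastic oracle.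
   Context: A query is one draw of a next state $s'\sim p(\cdot\mid s,a)$ for one pair $(s,a)$. $\tilde O$ denotes big-$O$ ignoring logarithmic factors. *)

theory Defs
  imports "HOL-Probability.Probability"
begin

(* States are {..<nS}, actions are {..<nA}; Q-functions are nat => nat => real,
   only their values on {..<nS} x {..<nA} matter. *)

definition maxA :: "nat \<Rightarrow> (nat \<Rightarrow> nat \<Rightarrow> real) \<Rightarrow> nat \<Rightarrow> real" where
  "maxA nA Q s = Max ((\<lambda>a. Q s a) ` {..<nA})"

definition supnorm :: "nat \<Rightarrow> nat \<Rightarrow> (nat \<Rightarrow> nat \<Rightarrow> real) \<Rightarrow> real" where
  "supnorm nS nA Q = Max ((\<lambda>(s,a). \<bar>Q s a\<bar>) ` ({..<nS} \<times> {..<nA}))"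

definition rmax :: "nat \<Rightarrow> nat \<Rightarrow> (nat \<Rightarrow> nat \<Rightarrow> real) \<Rightarrow> real" where
  "rmax nS nA r = Max ((\<lambda>(s,a). r s a) ` ({..<nS} \<times> {..<nA}))"

definition bellman :: "nat \<Rightarrow> nat \<Rightarrow> (nat \<Rightarrow> nat \<Rightarrow> nat pmf) \<Rightarrow> (nat \<Rightarrow> nat \<Rightarrow> real)
    \<Rightarrow> real \<Rightarrow> (nat \<Rightarrow> nat \<Rightarrow> real) \<Rightarrow> nat \<Rightarrow> nat \<Rightarrow> real" where
  "bellman nS nA p r \<gamma> Q s a = (\<Sum>s'<nS. pmf (p s a) s' * (r s a + \<gamma> * maxA nA Q s'))"

definition kn :: "real \<Rightarrow> nat \<Rightarrow> nat \<Rightarrow> nat" where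
  "kn \<gamma> N n = nat \<lceil>real n ^ 2 * \<gamma> ^ (N - n)\<rceil>"

definition beta :: "nat \<Rightarrow> real" where
  "beta n = real n / (real n + 1)"

definition samples :: "nat \<Rightarrow> nat \<Rightarrow> (nat \<Rightarrow> nat \<Rightarrow> nat pmf) \<Rightarrow> nat
    \<Rightarrow> (nat \<times> nat \<times> nat \<Rightarrow> nat) pmf" where
  "samples nS nA p k = Pi_pmf ({..<nS} \<times> {..<nA} \<times> {..<k}) 0 (\<lambda>(s,a,i). p s a)"

definition emp_bellman :: "nat \<Rightarrow> (nat \<Rightarrow> nat \<Rightarrow> real) \<Rightarrow> real \<Rightarrow> nat
    \<Rightarrow> (nat \<Rightarrow> nat \<Rightarrow> real) \<Rightarrow> (nat \<times> nat \<times> nat \<Rightarrow> nat) \<Rightarrow> nat \<Rightarrow> nat \<Rightarrow> real" where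
  "emp_bellman nA r \<gamma> k Q \<omega> s a =
     r s a + \<gamma> * (1 / real k) * (\<Sum>i<k. maxA nA Q (\<omega> (s, a, i)))"

definition alg_step :: "nat \<Rightarrow> nat \<Rightarrow> (nat \<Rightarrow> nat \<Rightarrow> nat pmf) \<Rightarrow> (nat \<Rightarrow> nat \<Rightarrow> real)
    \<Rightarrow> real \<Rightarrow> (nat \<Rightarrow> nat \<Rightarrow> real) \<Rightarrow> nat \<Rightarrow> nat
    \<Rightarrow> (nat \<Rightarrow> nat \<Rightarrow> real) \<Rightarrow> (nat \<Rightarrow> nat \<Rightarrow> real) pmf" where
  "alg_step nS nA p r \<gamma> Q0 N n Q =
     map_pmf (\<lambda>\<omega> s a. (1 - beta n) * Q0 s a + beta n * emp_bellman nA r \<gamma> (kn \<gamma> N n) Q \<omega> s a)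
       (samples nS nA p (kn \<gamma> N n))"

fun alg_iter :: "nat \<Rightarrow> nat \<Rightarrow> (nat \<Rightarrow> nat \<Rightarrow> nat pmf) \<Rightarrow> (nat \<Rightarrow> nat \<Rightarrow> real)
    \<Rightarrow> real \<Rightarrow> (nat \<Rightarrow> nat \<Rightarrow> real) \<Rightarrow> nat \<Rightarrow> nat \<Rightarrow> (nat \<Rightarrow> nat \<Rightarrow> real) pmf" where
  "alg_iter nS nA p r \<gamma> Q0 N 0 = return_pmf Q0"
| "alg_iter nS nA p r \<gamma> Q0 N (Suc n) =
     bind_pmf (alg_iter nS nA p r \<gamma> Q0 N n) (alg_step nS nA p r \<gamma> Q0 N (Suc n))"

definition queries :: "nat \<Rightarrow> nat \<Rightarrow> real \<Rightarrow> nat \<Rightarrow> nat" where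
  "queries nS nA \<gamma> N = (\<Sum>n=1..N. nS * nA * kn \<gamma> N n)"

end

theory Submission
  imports Defs
begin

text \<open>
  The weights \<open>\<beta>\<^sub>n = n / (n + 1)\<close> make the iteration an anchored (Halpern-type) average:
  with \<open>e\<^sub>n = \<parallel>Q\<^sup>n - Q\<^sup>*\<parallel>\<close> one has \<open>(n + 1) e\<^sub>n \<le> e\<^sub>0 + \<gamma> n (e\<^sub>n\<^sub>-\<^sub>1 + \<delta>\<^sub>n)\<close>, where
  \<open>\<delta>\<^sub>n\<close> is the sup-norm error of the empirical Bellman operator at step \<open>n\<close>. Hoeffding's
  inequality and a union bound over the \<open>|S \<times> A|\<close> pairs give
  \<open>E \<delta>\<^sub>n = O(Vmax sqrt (log (|S \<times> A| k\<^sub>n) / k\<^sub>n))\<close> with \<open>Vmax = r\<^sub>m\<^sub>a\<^sub>x / (1 - \<gamma>)\<close>.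
  After unrolling the recursion, the batch sizes \<open>k\<^sub>n = \<lceil>n\<^sup>2 \<gamma>\<^sup>N\<^sup>-\<^sup>n\<rceil>\<close> turn the accumulated
  sampling error into a geometric series in \<open>sqrt \<gamma>\<close>, so \<open>(N + 1) E e\<^sub>N = O(Vmax sqrt log / (1 - \<gamma>))\<close>.
  Hence \<open>N\<close> of order \<open>Vmax log / ((1 - \<gamma>) \<epsilon>)\<close> iterations suffice, and they cost
  \<open>|S \<times> A| \<Sum>\<^sub>n k\<^sub>n \<le> 2 |S \<times> A| N\<^sup>2 / (1 - \<gamma>)\<close> queries.
\<close>

section \<open>Expectations over finitely supported pmfs\<close>

lemma expectation_bind_pmf_finite_support:
  fixes f :: "'b \<Rightarrow> real"
  assumes fin: "finite (set_pmf (bind_pmf M N))"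
  shows "measure_pmf.expectation (bind_pmf M N) f =
    measure_pmf.expectation M (\<lambda>x. measure_pmf.expectation (N x) f)"
proof -
  define S where "S = set_pmf (bind_pmf M N)"
  define g where "g y = (if y \<in> S then f y else 0)" for y
  have g_bounded: "\<bar>g y\<bar> \<le> (\<Sum>z\<in>S. \<bar>f z\<bar>)" for y
    using fin unfolding g_def S_def by (auto intro: member_le_sum)
  have "measure_pmf.expectation (bind_pmf M N) f = measure_pmf.expectation (bind_pmf M N) g"
    unfolding g_def S_def by (intro integral_cong_AE) (auto simp: AE_measure_pmf_iff)
  also have "\<dots> = measure_pmf.expectation M (\<lambda>x. measure_pmf.expectation (N x) g)"
    unfolding measure_pmf_bind
    by (rule integral_bind[where K="count_space UNIV" and B'=1, OF _ g_bounded])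
       (auto simp: measure_pmf_in_subprob_algebra)
  also have "\<dots> = measure_pmf.expectation M (\<lambda>x. measure_pmf.expectation (N x) f)"
    unfolding g_def S_def
    by (intro integral_cong_AE) (auto simp: AE_measure_pmf_iff intro!: integral_cong_AE)
  finally show ?thesis .
qed

lemma expectation_mono_finite_pmf:
  fixes f g :: "'a \<Rightarrow> real"
  assumes "finite (set_pmf M)" "\<And>x. x \<in> set_pmf M \<Longrightarrow> f x \<le> g x"
  shows "measure_pmf.expectation M f \<le> measure_pmf.expectation M g"
  using assms by (intro integral_mono_AE integrable_measure_pmf_finite) (auto simp: AE_measure_pmf_iff)

lemma expectation_affine_finite_pmf:
  fixes f :: "'a \<Rightarrow> real"
  assumes "finite (set_pmf M)"
  shows "measure_pmf.expectation M (\<lambda>x. a + b * f x) = a + b * measure_pmf.expectation M f"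
  using assms by (subst Bochner_Integration.integral_add) (auto intro: integrable_measure_pmf_finite)

lemma expectation_le_threshold_plus_tail:
  fixes Y :: "'a \<Rightarrow> real"
  assumes fin: "finite (set_pmf M)" and u: "0 \<le> u"
    and bounded: "\<And>x. x \<in> set_pmf M \<Longrightarrow> Y x \<le> C"
  shows "measure_pmf.expectation M Y \<le> u + C * measure_pmf.prob M {x. u \<le> Y x}"
proof -
  have "measure_pmf.expectation M Y \<le> measure_pmf.expectation M (\<lambda>x. u + C * indicator {x. u \<le> Y x} x)"
    using fin u bounded
    by (intro integral_mono_AE integrable_measure_pmf_finite)
       (auto simp: AE_measure_pmf_iff indicator_def intro: add_increasing)
  also have "\<dots> = u + C * measure_pmf.prob M {x. u \<le> Y x}"
    using fin by (subst Bochner_Integration.integral_add) (auto intro: integrable_measure_pmf_finite)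
  finally show ?thesis .
qed

lemma prob_Pi_pmf_sum_deviation:
  fixes P :: "'b pmf" and f :: "'b \<Rightarrow> real" and B t :: real
  assumes I: "finite I" and J: "J \<subseteq> I" "J \<noteq> {}" and identical: "\<And>j. j \<in> J \<Longrightarrow> q j = P"
    and f: "\<And>x. x \<in> set_pmf P \<Longrightarrow> \<bar>f x\<bar> \<le> B" and B: "0 < B" and t: "0 \<le> t"
  shows "measure_pmf.prob (Pi_pmf I d q)
      {\<omega>. t \<le> \<bar>(\<Sum>j\<in>J. f (\<omega> j)) - card J * measure_pmf.expectation P f\<bar>}
    \<le> 2 * exp (- (t\<^sup>2 / (2 * card J * B\<^sup>2)))"
proof -
  define M where "M = measure_pmf (Pi_pmf I d q)"
  have finJ: "finite J" using finite_subset[OF J(1) I] .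
  then have card_J: "0 < card J" using J(2) by (simp add: card_gt_0_iff)
  have marginal: "map_pmf (\<lambda>\<omega>. \<omega> j) (Pi_pmf I d q) = P" if "j \<in> J" for j
    using that I J identical by (subst Pi_pmf_component) auto
  interpret M: prob_space M unfolding M_def by (rule measure_pmf.prob_space_axioms)
  interpret H: Hoeffding_ineq M J "\<lambda>j \<omega>. f (\<omega> j)" "\<lambda>_. -B" "\<lambda>_. B"
    "card J * measure_pmf.expectation P f"
  proof unfold_locales
    show "finite J" by (fact finJ)
    have "M.indep_vars (\<lambda>_. count_space UNIV) (\<lambda>j \<omega>. \<omega> j) J"
      using M.indep_vars_subset[OF indep_vars_Pi_pmf[OF I, of d q, folded M_def] J(1)] .
    then show "M.indep_vars (\<lambda>_. borel) (\<lambda>j \<omega>. f (\<omega> j)) J"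
      by (rule M.indep_vars_compose2) auto
    fix j assume j: "j \<in> J"
    have "\<omega> j \<in> set_pmf P" if "\<omega> \<in> set_pmf (Pi_pmf I d q)" for \<omega>
      using that unfolding marginal[OF j, symmetric] by simp
    then show "AE \<omega> in M. f (\<omega> j) \<in> {-B..B}"
      using f unfolding M_def by (fastforce simp: AE_measure_pmf_iff abs_le_iff)
  next
    have "M.expectation (\<lambda>\<omega>. f (\<omega> j)) = measure_pmf.expectation P f" if "j \<in> J" for j
      unfolding M_def marginal[OF that, symmetric] by simp
    then show "card J * measure_pmf.expectation P f \<equiv> (\<Sum>j\<in>J. M.expectation (\<lambda>\<omega>. f (\<omega> j)))"
      by simp
  qed
  have "M.prob {\<omega> \<in> space M. \<bar>(\<Sum>j\<in>J. f (\<omega> j)) - card J * measure_pmf.expectation P f\<bar> \<ge> t}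
      \<le> 2 * exp (-2 * t\<^sup>2 / (\<Sum>j\<in>J. (B - - B)\<^sup>2))"
    using card_J B t by (intro H.Hoeffding_ineq_abs_ge) auto
  also have "-2 * t\<^sup>2 / (\<Sum>j\<in>J. (B - - B)\<^sup>2) = - (t\<^sup>2 / (2 * card J * B\<^sup>2))"
    by (simp add: field_simps power2_eq_square)
  finally show ?thesis unfolding M_def by simp
qed

lemma prob_Pi_pmf_sample_mean_deviation:
  fixes P :: "'b pmf" and f :: "'b \<Rightarrow> real" and B u :: real
  assumes I: "finite I" and J: "J \<subseteq> I" "J \<noteq> {}" and identical: "\<And>j. j \<in> J \<Longrightarrow> q j = P"
    and f: "\<And>x. x \<in> set_pmf P \<Longrightarrow> \<bar>f x\<bar> \<le> B" and B: "0 < B" and u: "0 \<le> u"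
  shows "measure_pmf.prob (Pi_pmf I d q)
      {\<omega>. u \<le> \<bar>(\<Sum>j\<in>J. f (\<omega> j)) / card J - measure_pmf.expectation P f\<bar>}
    \<le> 2 * exp (- (card J * u\<^sup>2 / (2 * B\<^sup>2)))"
proof -
  define n where "n = real (card J)"
  define \<mu> where "\<mu> = measure_pmf.expectation P f"
  have n: "0 < n" using J finite_subset[OF J(1) I] by (simp add: n_def card_gt_0_iff)
  have "S - n * \<mu> = n * (S / n - \<mu>)" for S
    using n by (simp add: field_simps)
  then have "\<bar>S - n * \<mu>\<bar> = n * \<bar>S / n - \<mu>\<bar>" for S
    using n by (simp add: abs_mult)
  then have "{\<omega>. u \<le> \<bar>(\<Sum>j\<in>J. f (\<omega> j)) / n - \<mu>\<bar>} = {\<omega>. n * u \<le> \<bar>(\<Sum>j\<in>J. f (\<omega> j)) - n * \<mu>\<bar>}"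
    using n by (auto simp: mult_le_cancel_left_pos)
  moreover have "(n * u)\<^sup>2 / (2 * n * B\<^sup>2) = n * u\<^sup>2 / (2 * B\<^sup>2)"
    using n by (simp add: power2_eq_square)
  ultimately show ?thesis
    using prob_Pi_pmf_sum_deviation[OF assms(1-6), where t="n * u" and d=d] n u
    unfolding n_def \<mu>_def by simp
qed

section \<open>Recurrences and geometric sums\<close>

lemma affine_recurrence_le:
  fixes x c :: "nat \<Rightarrow> real"
  assumes \<gamma>: "0 \<le> \<gamma>" "\<gamma> < 1" and start: "x 0 \<le> D / (1 - \<gamma>)"
    and step: "\<And>n. x (Suc n) \<le> D + \<gamma> * x n + c (Suc n)"
  shows "x n \<le> D / (1 - \<gamma>) + (\<Sum>m=1..n. \<gamma> ^ (n - m) * c m)"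
proof (induction n)
  case 0
  then show ?case using start by simp
next
  case (Suc n)
  have "(\<Sum>m=1..n. \<gamma> ^ (Suc n - m) * c m) = \<gamma> * (\<Sum>m=1..n. \<gamma> ^ (n - m) * c m)"
    by (simp add: sum_distrib_left Suc_diff_le mult.assoc)
  then have sum: "(\<Sum>m=1..Suc n. \<gamma> ^ (Suc n - m) * c m) = \<gamma> * (\<Sum>m=1..n. \<gamma> ^ (n - m) * c m) + c (Suc n)"
    by (simp add: sum.cl_ivl_Suc)
  have "x (Suc n) \<le> D + \<gamma> * (D / (1 - \<gamma>) + (\<Sum>m=1..n. \<gamma> ^ (n - m) * c m)) + c (Suc n)"
    using step[of n] mult_left_mono[OF Suc.IH \<gamma>(1)] by linarith
  also have "\<dots> = D / (1 - \<gamma>) + (\<Sum>m=1..Suc n. \<gamma> ^ (Suc n - m) * c m)"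
    unfolding sum using \<gamma> by (simp add: field_simps)
  finally show ?case .
qed

lemma sum_power_diff_le:
  fixes x :: real
  assumes "0 \<le> x" "x < 1"
  shows "(\<Sum>m=1..N. x ^ (N - m)) \<le> 1 / (1 - x)"
proof -
  have "(\<Sum>m=1..N. x ^ (N - m)) = (\<Sum>j<N. x ^ j)"
    by (rule sum.reindex_bij_witness[of _ "\<lambda>j. N - j" "\<lambda>m. N - m"]) auto
  also have "\<dots> = (1 - x ^ N) / (1 - x)"
    using assms by (simp add: sum_gp_strict)
  also have "\<dots> \<le> 1 / (1 - x)"
    using assms by (intro divide_right_mono) auto
  finally show ?thesis .
qed

lemma sum_sqrt_power_diff_le:
  fixes \<gamma> :: real
  assumes "0 \<le> \<gamma>" "\<gamma> < 1"
  shows "(\<Sum>m=1..N. sqrt \<gamma> ^ (N - m)) \<le> 2 / (1 - \<gamma>)"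
proof -
  have "1 - \<gamma> = (1 - sqrt \<gamma>) * (1 + sqrt \<gamma>)"
    using assms by (simp add: algebra_simps)
  also have "\<dots> \<le> (1 - sqrt \<gamma>) * 2"
    using assms by (intro mult_left_mono) auto
  finally have "1 / (1 - sqrt \<gamma>) \<le> 2 / (1 - \<gamma>)"
    using assms by (simp add: field_simps)
  then show ?thesis
    using sum_power_diff_le[of "sqrt \<gamma>" N] assms by simp
qed

section \<open>Greedy values, sup-norms and the sampled update\<close>

lemma maxA_ge: "a < nA \<Longrightarrow> Q s a \<le> maxA nA Q s"
  unfolding maxA_def by (rule Max_ge) auto

lemma maxA_attained:
  assumes "0 < nA"
  shows "\<exists>a<nA. maxA nA Q s = Q s a"
proof -
  have "maxA nA Q s \<in> (\<lambda>a. Q s a) ` {..<nA}"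
    unfolding maxA_def using assms by (intro Max_in) auto
  then show ?thesis by auto
qed

lemma abs_maxA_le:
  assumes "0 < nA" "\<And>a. a < nA \<Longrightarrow> \<bar>Q s a\<bar> \<le> c"
  shows "\<bar>maxA nA Q s\<bar> \<le> c"
proof -
  obtain a where "a < nA" "maxA nA Q s = Q s a" using maxA_attained[OF assms(1)] by blast
  moreover have "Q s 0 \<le> maxA nA Q s" using maxA_ge assms(1) .
  ultimately show ?thesis using assms(2)[of a] assms(2)[of 0] assms(1) by (auto simp: abs_le_iff)
qed

lemma abs_maxA_diff_le:
  assumes "0 < nA" "\<And>a. a < nA \<Longrightarrow> \<bar>Q s a - Q' s a\<bar> \<le> c"
  shows "\<bar>maxA nA Q s - maxA nA Q' s\<bar> \<le> c"
proof -
  obtain a where a: "a < nA" "maxA nA Q s = Q s a" using maxA_attained[OF assms(1)] by blast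
  obtain a' where a': "a' < nA" "maxA nA Q' s = Q' s a'" using maxA_attained[OF assms(1)] by blast
  show ?thesis
    using a a' maxA_ge[OF a'(1), of Q s] maxA_ge[OF a(1), of Q' s] assms(2)[OF a(1)] assms(2)[OF a'(1)]
    by (auto simp: abs_le_iff)
qed

lemma abs_le_supnorm: "s < nS \<Longrightarrow> a < nA \<Longrightarrow> \<bar>Q s a\<bar> \<le> supnorm nS nA Q"
  unfolding supnorm_def by (rule Max_ge) auto

lemma supnorm_le:
  assumes "0 < nS" "0 < nA" "\<And>s a. s < nS \<Longrightarrow> a < nA \<Longrightarrow> \<bar>Q s a\<bar> \<le> c"
  shows "supnorm nS nA Q \<le> c"
  unfolding supnorm_def using assms by (subst Max_le_iff) auto

lemma supnorm_nonneg: "0 < nS \<Longrightarrow> 0 < nA \<Longrightarrow> 0 \<le> supnorm nS nA Q"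
  using abs_le_supnorm[of 0 nS 0 nA Q] by simp

lemma supnorm_attained:
  assumes "0 < nS" "0 < nA"
  shows "\<exists>s<nS. \<exists>a<nA. supnorm nS nA Q = \<bar>Q s a\<bar>"
  using Max_in[of "(\<lambda>(s, a). \<bar>Q s a\<bar>) ` ({..<nS} \<times> {..<nA})"] assms
  unfolding supnorm_def by fastforce

lemma rmax_ge: "s < nS \<Longrightarrow> a < nA \<Longrightarrow> r s a \<le> rmax nS nA r"
  unfolding rmax_def by (rule Max_ge) auto

lemma rmax_le:
  assumes "0 < nS" "0 < nA" "\<And>s a. s < nS \<Longrightarrow> a < nA \<Longrightarrow> r s a \<le> c"
  shows "rmax nS nA r \<le> c"
  unfolding rmax_def using assms by (subst Max_le_iff) auto

lemma abs_pmf_weighted_sum_le: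
  fixes P :: "nat pmf"
  assumes "set_pmf P \<subseteq> {..<n}" "\<And>x. x < n \<Longrightarrow> \<bar>f x\<bar> \<le> c"
  shows "\<bar>\<Sum>x<n. pmf P x * f x\<bar> \<le> c"
proof -
  have "\<bar>\<Sum>x<n. pmf P x * f x\<bar> \<le> (\<Sum>x<n. pmf P x * c)"
    using assms(2) by (intro order_trans[OF sum_abs] sum_mono) (auto simp: abs_mult intro: mult_left_mono)
  also have "\<dots> = (\<Sum>x<n. pmf P x) * c" by (simp add: sum_distrib_right)
  also have "(\<Sum>x<n. pmf P x) = 1" using assms(1) by (intro sum_pmf_eq_1) auto
  finally show ?thesis by simp
qed

lemma abs_mean_le:
  assumes "0 < k" "\<And>i. i < k \<Longrightarrow> \<bar>f i\<bar> \<le> c"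
  shows "\<bar>1 / real k * (\<Sum>i<k. f i)\<bar> \<le> c"
proof -
  have "\<bar>\<Sum>i<k. f i\<bar> \<le> (\<Sum>i<k. c)"
    using assms(2) by (intro order_trans[OF sum_abs] sum_mono) auto
  then show ?thesis using assms(1) by (simp add: abs_mult field_simps)
qed

definition expected_next :: "nat \<Rightarrow> nat \<Rightarrow> (nat \<Rightarrow> nat \<Rightarrow> nat pmf) \<Rightarrow> (nat \<Rightarrow> nat \<Rightarrow> real)
    \<Rightarrow> nat \<Rightarrow> nat \<Rightarrow> real" where
  "expected_next nS nA p Q s a = (\<Sum>s'<nS. pmf (p s a) s' * maxA nA Q s')"

definition sample_mean :: "nat \<Rightarrow> nat \<Rightarrow> (nat \<Rightarrow> nat \<Rightarrow> real) \<Rightarrow> (nat \<times> nat \<times> nat \<Rightarrow> nat)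
    \<Rightarrow> nat \<Rightarrow> nat \<Rightarrow> real" where
  "sample_mean nA k Q \<omega> s a = 1 / real k * (\<Sum>i<k. maxA nA Q (\<omega> (s, a, i)))"

definition sampling_error :: "nat \<Rightarrow> nat \<Rightarrow> (nat \<Rightarrow> nat \<Rightarrow> nat pmf) \<Rightarrow> nat \<Rightarrow> (nat \<Rightarrow> nat \<Rightarrow> real)
    \<Rightarrow> (nat \<times> nat \<times> nat \<Rightarrow> nat) \<Rightarrow> real" where
  "sampling_error nS nA p k Q \<omega> =
     supnorm nS nA (\<lambda>s a. sample_mean nA k Q \<omega> s a - expected_next nS nA p Q s a)"

definition alg_update :: "nat \<Rightarrow> (nat \<Rightarrow> nat \<Rightarrow> real) \<Rightarrow> real \<Rightarrow> (nat \<Rightarrow> nat \<Rightarrow> real) \<Rightarrow> nat \<Rightarrow> nat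
    \<Rightarrow> (nat \<Rightarrow> nat \<Rightarrow> real) \<Rightarrow> (nat \<times> nat \<times> nat \<Rightarrow> nat) \<Rightarrow> nat \<Rightarrow> nat \<Rightarrow> real" where
  "alg_update nA r \<gamma> Q0 n k Q \<omega> s a = (1 - beta n) * Q0 s a + beta n * emp_bellman nA r \<gamma> k Q \<omega> s a"

lemma alg_step_eq_map_pmf:
  "alg_step nS nA p r \<gamma> Q0 N n Q = map_pmf (alg_update nA r \<gamma> Q0 n (kn \<gamma> N n) Q) (samples nS nA p (kn \<gamma> N n))"
  unfolding alg_step_def alg_update_def by (simp add: fun_eq_iff)

lemma emp_bellman_eq: "emp_bellman nA r \<gamma> k Q \<omega> s a = r s a + \<gamma> * sample_mean nA k Q \<omega> s a"
  unfolding emp_bellman_def sample_mean_def by simp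

lemma bellman_eq:
  assumes "set_pmf (p s a) \<subseteq> {..<nS}"
  shows "bellman nS nA p r \<gamma> Q s a = r s a + \<gamma> * expected_next nS nA p Q s a"
proof -
  have "bellman nS nA p r \<gamma> Q s a
      = (\<Sum>s'<nS. pmf (p s a) s') * r s a + \<gamma> * expected_next nS nA p Q s a"
    unfolding bellman_def expected_next_def
    by (simp add: algebra_simps sum.distrib sum_distrib_left sum_distrib_right)
  also have "(\<Sum>s'<nS. pmf (p s a) s') = 1" using assms by (intro sum_pmf_eq_1) auto
  finally show ?thesis by simp
qed

lemma beta_convex: "0 \<le> beta n" "beta n \<le> 1"
  unfolding beta_def by auto

lemma beta_scaled: "(real n + 1) * (1 - beta n) = 1" "(real n + 1) * beta n = real n"
  unfolding beta_def by (auto simp: field_simps)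

lemma samples_in_support:
  assumes "\<omega> \<in> set_pmf (samples nS nA p k)" "s < nS" "a < nA" "i < k"
  shows "\<omega> (s, a, i) \<in> set_pmf (p s a)"
  using assms unfolding samples_def by (auto simp: set_Pi_pmf PiE_dflt_def)

lemma finite_set_pmf_samples:
  assumes "\<forall>s<nS. \<forall>a<nA. set_pmf (p s a) \<subseteq> {..<nS}"
  shows "finite (set_pmf (samples nS nA p k))"
proof -
  have "finite (set_pmf (p s a))" if "(s, a, i) \<in> {..<nS} \<times> {..<nA} \<times> {..<k}" for s a i
    using that assms by (auto intro: finite_subset)
  then show ?thesis
    unfolding samples_def by (subst set_Pi_pmf) (auto intro!: finite_PiE_dflt)
qed

lemma kn_pos: "0 < \<gamma> \<Longrightarrow> 0 < n \<Longrightarrow> 0 < kn \<gamma> N n"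
  unfolding kn_def by simp

lemma kn_ge: "0 < \<gamma> \<Longrightarrow> real n ^ 2 * \<gamma> ^ (N - n) \<le> real (kn \<gamma> N n)"
  unfolding kn_def by simp

lemma kn_le: "0 < \<gamma> \<Longrightarrow> real (kn \<gamma> N n) \<le> real n ^ 2 * \<gamma> ^ (N - n) + 1"
  unfolding kn_def by (simp add: of_nat_ceiling)

lemma kn_le_square:
  assumes "0 < \<gamma>" "\<gamma> \<le> 1"
  shows "kn \<gamma> N n \<le> n ^ 2"
proof -
  have "real n ^ 2 * \<gamma> ^ (N - n) \<le> real (n ^ 2)"
    using assms by (simp add: mult_left_le power_le_one)
  then show ?thesis unfolding kn_def by (simp add: ceiling_le_iff nat_le_iff)
qed

lemma queries_le:
  assumes "0 < \<gamma>" "\<gamma> < 1"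
  shows "real (queries nS nA \<gamma> N) \<le> 2 * real (nS * nA) * real N ^ 2 / (1 - \<gamma>)"
proof -
  have "(\<Sum>n=1..N. real (kn \<gamma> N n)) \<le> (\<Sum>n=1..N. real N ^ 2 * \<gamma> ^ (N - n) + 1)"
  proof (intro sum_mono)
    fix n assume "n \<in> {1..N}"
    then have "real n ^ 2 * \<gamma> ^ (N - n) \<le> real N ^ 2 * \<gamma> ^ (N - n)"
      using assms by (intro mult_right_mono power_mono) auto
    then show "real (kn \<gamma> N n) \<le> real N ^ 2 * \<gamma> ^ (N - n) + 1"
      using kn_le[OF assms(1), of N n] by linarith
  qed
  also have "\<dots> = real N ^ 2 * (\<Sum>n=1..N. \<gamma> ^ (N - n)) + real N"
    by (simp add: sum.distrib sum_distrib_left)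
  also have "\<dots> \<le> real N ^ 2 * (1 / (1 - \<gamma>)) + real N ^ 2 * (1 / (1 - \<gamma>))"
  proof (intro add_mono mult_left_mono sum_power_diff_le)
    have "real N \<le> real N ^ 2" by (cases N) (auto simp: power2_eq_square)
    also have "\<dots> \<le> real N ^ 2 * (1 / (1 - \<gamma>))"
      using mult_left_mono[of 1 "1 / (1 - \<gamma>)" "real N ^ 2"] assms by (simp add: field_simps)
    finally show "real N \<le> real N ^ 2 * (1 / (1 - \<gamma>))" .
  qed (use assms in auto)
  finally have "(\<Sum>n=1..N. real (kn \<gamma> N n)) \<le> 2 * real N ^ 2 / (1 - \<gamma>)" by simp
  then have "real (nS * nA) * (\<Sum>n=1..N. real (kn \<gamma> N n)) \<le> real (nS * nA) * (2 * real N ^ 2 / (1 - \<gamma>))"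
    by (rule mult_left_mono) simp
  then show ?thesis
    unfolding queries_def by (simp add: sum_distrib_left ac_simps)
qed

locale finite_mdp =
  fixes nS nA :: nat and p :: "nat \<Rightarrow> nat \<Rightarrow> nat pmf" and r :: "nat \<Rightarrow> nat \<Rightarrow> real" and \<gamma> :: real
  assumes states: "0 < nS" and actions: "0 < nA"
    and discount: "0 < \<gamma>" "\<gamma> < 1"
    and reward_nonneg: "\<And>s a. s < nS \<Longrightarrow> a < nA \<Longrightarrow> 0 \<le> r s a"
    and transitions: "\<And>s a. s < nS \<Longrightarrow> a < nA \<Longrightarrow> set_pmf (p s a) \<subseteq> {..<nS}"
begin

definition Vmax :: real where
  "Vmax = rmax nS nA r / (1 - \<gamma>)"

lemma abs_reward_le: "s < nS \<Longrightarrow> a < nA \<Longrightarrow> \<bar>r s a\<bar> \<le> rmax nS nA r"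
  using reward_nonneg rmax_ge by fastforce

lemma Vmax_nonneg: "0 \<le> Vmax"
  using abs_reward_le[OF states actions] discount unfolding Vmax_def by simp

lemma rmax_plus_discounted_Vmax: "rmax nS nA r + \<gamma> * Vmax = Vmax"
  using discount unfolding Vmax_def by (simp add: field_simps)

lemma bellman_expected_next:
  "s < nS \<Longrightarrow> a < nA \<Longrightarrow> bellman nS nA p r \<gamma> Q s a = r s a + \<gamma> * expected_next nS nA p Q s a"
  using bellman_eq transitions by blast

lemma abs_expected_next_le:
  assumes "s < nS" "a < nA" "\<And>s' a'. s' < nS \<Longrightarrow> a' < nA \<Longrightarrow> \<bar>Q s' a'\<bar> \<le> c"
  shows "\<bar>expected_next nS nA p Q s a\<bar> \<le> c"
  unfolding expected_next_def
  using assms transitions by (intro abs_pmf_weighted_sum_le abs_maxA_le actions) auto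

lemma abs_sample_mean_le:
  assumes "\<omega> \<in> set_pmf (samples nS nA p k)" "0 < k" "s < nS" "a < nA"
    and "\<And>s' a'. s' < nS \<Longrightarrow> a' < nA \<Longrightarrow> \<bar>Q s' a'\<bar> \<le> c"
  shows "\<bar>sample_mean nA k Q \<omega> s a\<bar> \<le> c"
  unfolding sample_mean_def
  using assms samples_in_support[OF assms(1)] transitions
  by (intro abs_mean_le abs_maxA_le actions) blast+

lemma supnorm_fixpoint_le:
  assumes fixpoint: "\<And>s a. s < nS \<Longrightarrow> a < nA \<Longrightarrow> Qs s a = bellman nS nA p r \<gamma> Qs s a"
  shows "supnorm nS nA Qs \<le> Vmax"
proof -
  define M where "M = supnorm nS nA Qs"
  have "M \<le> rmax nS nA r + \<gamma> * M"
    unfolding M_def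
  proof (rule supnorm_le[OF states actions])
    fix s a assume sa: "s < nS" "a < nA"
    have "\<bar>expected_next nS nA p Qs s a\<bar> \<le> supnorm nS nA Qs"
      using sa by (intro abs_expected_next_le abs_le_supnorm)
    then have "\<bar>r s a + \<gamma> * expected_next nS nA p Qs s a\<bar> \<le> rmax nS nA r + \<gamma> * supnorm nS nA Qs"
      using abs_reward_le[OF sa] discount
      by (intro order_trans[OF abs_triangle_ineq] add_mono) (auto simp: abs_mult)
    then show "\<bar>Qs s a\<bar> \<le> rmax nS nA r + \<gamma> * supnorm nS nA Qs"
      using fixpoint[OF sa] bellman_expected_next[OF sa] by simp
  qed
  then show ?thesis
    using discount unfolding M_def Vmax_def by (simp add: field_simps)
qed

lemma abs_alg_update_le:
  assumes \<omega>: "\<omega> \<in> set_pmf (samples nS nA p k)" and k: "0 < k"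
    and Q0: "\<And>s a. s < nS \<Longrightarrow> a < nA \<Longrightarrow> \<bar>Q0 s a\<bar> \<le> Vmax"
    and Q: "\<And>s a. s < nS \<Longrightarrow> a < nA \<Longrightarrow> \<bar>Q s a\<bar> \<le> Vmax"
    and sa: "s < nS" "a < nA"
  shows "\<bar>alg_update nA r \<gamma> Q0 n k Q \<omega> s a\<bar> \<le> Vmax"
proof -
  have "\<bar>r s a + \<gamma> * sample_mean nA k Q \<omega> s a\<bar> \<le> rmax nS nA r + \<gamma> * Vmax"
    using abs_reward_le[OF sa] abs_sample_mean_le[OF \<omega> k sa Q] discount
    by (intro order_trans[OF abs_triangle_ineq] add_mono) (auto simp: abs_mult)
  then have "\<bar>emp_bellman nA r \<gamma> k Q \<omega> s a\<bar> \<le> Vmax"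
    by (simp add: emp_bellman_eq rmax_plus_discounted_Vmax)
  then have "\<bar>alg_update nA r \<gamma> Q0 n k Q \<omega> s a\<bar> \<le> (1 - beta n) * Vmax + beta n * Vmax"
    unfolding alg_update_def using Q0[OF sa] beta_convex[of n]
    by (intro order_trans[OF abs_triangle_ineq] add_mono) (auto simp: abs_mult intro: mult_left_mono)
  then show ?thesis by (simp add: algebra_simps)
qed

lemma abs_expected_next_diff_le:
  assumes "s < nS" "a < nA"
  shows "\<bar>expected_next nS nA p Q s a - expected_next nS nA p Q' s a\<bar>
    \<le> supnorm nS nA (\<lambda>s a. Q s a - Q' s a)"
proof -
  have "expected_next nS nA p Q s a - expected_next nS nA p Q' s a
      = (\<Sum>s'<nS. pmf (p s a) s' * (maxA nA Q s' - maxA nA Q' s'))"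
    unfolding expected_next_def by (simp add: algebra_simps sum_subtractf)
  also have "\<bar>\<dots>\<bar> \<le> supnorm nS nA (\<lambda>s a. Q s a - Q' s a)"
    using transitions[OF assms] abs_le_supnorm[where Q="\<lambda>s a. Q s a - Q' s a"]
    by (intro abs_pmf_weighted_sum_le abs_maxA_diff_le actions) auto
  finally show ?thesis .
qed

lemma alg_update_minus_fixpoint:
  assumes fixpoint: "\<And>s a. s < nS \<Longrightarrow> a < nA \<Longrightarrow> Qs s a = bellman nS nA p r \<gamma> Qs s a"
    and sa: "s < nS" "a < nA"
  shows "(real n + 1) * (alg_update nA r \<gamma> Q0 n k Q \<omega> s a - Qs s a)
    = (Q0 s a - Qs s a) + \<gamma> * real n *
        ((sample_mean nA k Q \<omega> s a - expected_next nS nA p Q s a)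
         + (expected_next nS nA p Q s a - expected_next nS nA p Qs s a))"
proof -
  have "(real n + 1) * (alg_update nA r \<gamma> Q0 n k Q \<omega> s a - Qs s a)
      = ((real n + 1) * (1 - beta n)) * Q0 s a + ((real n + 1) * beta n) * emp_bellman nA r \<gamma> k Q \<omega> s a
        - (real n + 1) * Qs s a"
    unfolding alg_update_def by (simp add: algebra_simps)
  also have "\<dots> = (Q0 s a - Qs s a) + real n * (emp_bellman nA r \<gamma> k Q \<omega> s a - Qs s a)"
    unfolding beta_scaled by (simp add: algebra_simps)
  finally show ?thesis
    unfolding emp_bellman_eq fixpoint[OF sa] bellman_expected_next[OF sa] by (simp add: algebra_simps)
qed

lemma alg_update_error:
  assumes fixpoint: "\<And>s a. s < nS \<Longrightarrow> a < nA \<Longrightarrow> Qs s a = bellman nS nA p r \<gamma> Qs s a"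
  shows "(real n + 1) * supnorm nS nA (\<lambda>s a. alg_update nA r \<gamma> Q0 n k Q \<omega> s a - Qs s a)
    \<le> supnorm nS nA (\<lambda>s a. Q0 s a - Qs s a)
       + \<gamma> * real n * (supnorm nS nA (\<lambda>s a. Q s a - Qs s a) + sampling_error nS nA p k Q \<omega>)"
    (is "_ \<le> ?c")
proof -
  have "supnorm nS nA (\<lambda>s a. alg_update nA r \<gamma> Q0 n k Q \<omega> s a - Qs s a) \<le> ?c / (real n + 1)"
  proof (rule supnorm_le[OF states actions])
    fix s a assume sa: "s < nS" "a < nA"
    define dev where "dev = sample_mean nA k Q \<omega> s a - expected_next nS nA p Q s a"
    define contr where "contr = expected_next nS nA p Q s a - expected_next nS nA p Qs s a"
    have eq: "(real n + 1) * (alg_update nA r \<gamma> Q0 n k Q \<omega> s a - Qs s a)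
        = (Q0 s a - Qs s a) + \<gamma> * real n * (dev + contr)"
      unfolding dev_def contr_def by (rule alg_update_minus_fixpoint[OF fixpoint sa])
    have "\<bar>dev\<bar> \<le> sampling_error nS nA p k Q \<omega>"
      unfolding dev_def sampling_error_def using abs_le_supnorm[OF sa] .
    moreover have "\<bar>contr\<bar> \<le> supnorm nS nA (\<lambda>s a. Q s a - Qs s a)"
      unfolding contr_def using sa by (rule abs_expected_next_diff_le)
    moreover have "\<bar>Q0 s a - Qs s a\<bar> \<le> supnorm nS nA (\<lambda>s a. Q0 s a - Qs s a)"
      using abs_le_supnorm[OF sa, of "\<lambda>s a. Q0 s a - Qs s a"] by simp
    ultimately have "\<bar>(Q0 s a - Qs s a) + \<gamma> * real n * (dev + contr)\<bar> \<le> ?c"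
      using discount
      by (intro order_trans[OF abs_triangle_ineq] add_mono)
         (auto simp: abs_mult intro!: mult_left_mono order_trans[OF abs_triangle_ineq])
    then have "(real n + 1) * \<bar>alg_update nA r \<gamma> Q0 n k Q \<omega> s a - Qs s a\<bar> \<le> ?c"
      unfolding eq[symmetric] abs_mult by simp
    then show "\<bar>alg_update nA r \<gamma> Q0 n k Q \<omega> s a - Qs s a\<bar> \<le> ?c / (real n + 1)"
      by (simp add: field_simps)
  qed
  then show ?thesis by (simp add: field_simps)
qed

lemma prob_sample_mean_deviation:
  fixes B u :: real
  assumes k: "0 < k" and B: "0 < B" and u: "0 \<le> u" and sa: "s < nS" "a < nA"
    and Q: "\<And>s' a'. s' < nS \<Longrightarrow> a' < nA \<Longrightarrow> \<bar>Q s' a'\<bar> \<le> B"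
  shows "measure_pmf.prob (samples nS nA p k)
      {\<omega>. u \<le> \<bar>sample_mean nA k Q \<omega> s a - expected_next nS nA p Q s a\<bar>}
    \<le> 2 * exp (- (real k * u\<^sup>2 / (2 * B\<^sup>2)))"
proof -
  define J where "J = (\<lambda>i. (s, a, i)) ` {..<k}"
  have card_J: "card J = k" unfolding J_def by (simp add: card_image inj_on_def)
  have mean: "(\<Sum>j\<in>J. maxA nA Q (\<omega> j)) / real k = sample_mean nA k Q \<omega> s a" for \<omega>
    unfolding J_def sample_mean_def by (simp add: sum.reindex inj_on_def)
  have expectation: "measure_pmf.expectation (p s a) (maxA nA Q) = expected_next nS nA p Q s a"
    unfolding expected_next_def using transitions[OF sa]
    by (subst integral_measure_pmf_real[of "{..<nS}"]) (auto simp: mult.commute)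
  have "measure_pmf.prob (samples nS nA p k)
      {\<omega>. u \<le> \<bar>(\<Sum>j\<in>J. maxA nA Q (\<omega> j)) / card J - measure_pmf.expectation (p s a) (maxA nA Q)\<bar>}
    \<le> 2 * exp (- (card J * u\<^sup>2 / (2 * B\<^sup>2)))"
    unfolding samples_def using sa k B u transitions[OF sa]
    by (intro prob_Pi_pmf_sample_mean_deviation abs_maxA_le actions Q) (auto simp: J_def)
  then show ?thesis unfolding card_J mean expectation .
qed

lemma prob_sampling_error_ge:
  fixes B u :: real
  assumes k: "0 < k" and B: "0 < B" and u: "0 \<le> u"
    and Q: "\<And>s a. s < nS \<Longrightarrow> a < nA \<Longrightarrow> \<bar>Q s a\<bar> \<le> B"
  shows "measure_pmf.prob (samples nS nA p k) {\<omega>. u \<le> sampling_error nS nA p k Q \<omega>}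
    \<le> 2 * real (nS * nA) * exp (- (real k * u\<^sup>2 / (2 * B\<^sup>2)))"
proof -
  let ?M = "measure_pmf (samples nS nA p k)"
  define E where "E = (\<lambda>(s, a). {\<omega>. u \<le> \<bar>sample_mean nA k Q \<omega> s a - expected_next nS nA p Q s a\<bar>})"
  have "{\<omega>. u \<le> sampling_error nS nA p k Q \<omega>} \<subseteq> (\<Union>sa\<in>{..<nS} \<times> {..<nA}. E sa)"
  proof
    fix \<omega> assume "\<omega> \<in> {\<omega>. u \<le> sampling_error nS nA p k Q \<omega>}"
    moreover obtain s a where "s < nS" "a < nA"
      "sampling_error nS nA p k Q \<omega> = \<bar>sample_mean nA k Q \<omega> s a - expected_next nS nA p Q s a\<bar>"
      using supnorm_attained[OF states actions] unfolding sampling_error_def by blast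
    ultimately show "\<omega> \<in> (\<Union>sa\<in>{..<nS} \<times> {..<nA}. E sa)"
      unfolding E_def by force
  qed
  then have "measure ?M {\<omega>. u \<le> sampling_error nS nA p k Q \<omega>} \<le> measure ?M (\<Union>sa\<in>{..<nS} \<times> {..<nA}. E sa)"
    by (intro measure_pmf.finite_measure_mono) auto
  also have "\<dots> \<le> (\<Sum>sa\<in>{..<nS} \<times> {..<nA}. measure ?M (E sa))"
    by (intro measure_pmf.finite_measure_subadditive_finite) auto
  also have "\<dots> \<le> (\<Sum>sa\<in>{..<nS} \<times> {..<nA}. 2 * exp (- (real k * u\<^sup>2 / (2 * B\<^sup>2))))"
    unfolding E_def using k B u Q by (intro sum_mono) (auto intro!: prob_sample_mean_deviation)
  finally show ?thesis by simp
qed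

lemma sampling_error_le:
  assumes "\<omega> \<in> set_pmf (samples nS nA p k)" "0 < k"
    and Q: "\<And>s a. s < nS \<Longrightarrow> a < nA \<Longrightarrow> \<bar>Q s a\<bar> \<le> B"
  shows "sampling_error nS nA p k Q \<omega> \<le> 2 * B"
  unfolding sampling_error_def
proof (rule supnorm_le[OF states actions])
  fix s a assume sa: "s < nS" "a < nA"
  show "\<bar>sample_mean nA k Q \<omega> s a - expected_next nS nA p Q s a\<bar> \<le> 2 * B"
    using abs_sample_mean_le[OF assms(1,2) sa, of Q B] abs_expected_next_le[OF sa, of Q B] Q by force
qed

lemma prob_sampling_error_ge_threshold:
  fixes B :: real
  assumes k: "0 < k" and B: "0 < B"
    and Q: "\<And>s a. s < nS \<Longrightarrow> a < nA \<Longrightarrow> \<bar>Q s a\<bar> \<le> B"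
  defines "u \<equiv> B * sqrt (2 * ln (2 * real (nS * nA) * real k) / real k)"
  shows "measure_pmf.prob (samples nS nA p k) {\<omega>. u \<le> sampling_error nS nA p k Q \<omega>} \<le> 1 / real k"
proof -
  define d where "d = real (nS * nA)"
  define L where "L = ln (2 * d * real k)"
  have d: "0 < d" unfolding d_def using states actions by simp
  have dk: "1 \<le> d * real k" unfolding d_def using states actions k by (simp flip: of_nat_mult)
  then have L: "0 \<le> L" unfolding L_def by simp
  have "0 \<le> u" unfolding u_def d_def[symmetric] L_def[symmetric] using B L by simp
  then have "measure_pmf.prob (samples nS nA p k) {\<omega>. u \<le> sampling_error nS nA p k Q \<omega>}
      \<le> 2 * d * exp (- (real k * u\<^sup>2 / (2 * B\<^sup>2)))"
    unfolding d_def by (rule prob_sampling_error_ge[OF k B]) (rule Q)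
  also have "real k * u\<^sup>2 / (2 * B\<^sup>2) = L"
    unfolding u_def d_def[symmetric] L_def[symmetric] using B k L by (simp add: power_mult_distrib)
  also have "2 * d * exp (- L) = 1 / real k"
  proof -
    have "exp L = 2 * d * real k" unfolding L_def using dk by simp
    then show ?thesis using d k by (simp add: exp_minus field_simps)
  qed
  finally show ?thesis .
qed

lemma expected_sampling_error_le:
  fixes B :: real
  assumes k: "0 < k" and B: "0 < B"
    and Q: "\<And>s a. s < nS \<Longrightarrow> a < nA \<Longrightarrow> \<bar>Q s a\<bar> \<le> B"
  shows "measure_pmf.expectation (samples nS nA p k) (sampling_error nS nA p k Q)
    \<le> B * (sqrt (2 * ln (2 * real (nS * nA) * real k)) + 2) / sqrt (real k)"
proof -
  define L where "L = ln (2 * real (nS * nA) * real k)"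
  define u where "u = B * sqrt (2 * L / real k)"
  have "1 \<le> real (nS * nA) * real k" using states actions k by (simp flip: of_nat_mult)
  then have "0 \<le> u" unfolding u_def L_def using B by simp
  then have "measure_pmf.expectation (samples nS nA p k) (sampling_error nS nA p k Q)
      \<le> u + 2 * B * measure_pmf.prob (samples nS nA p k) {\<omega>. u \<le> sampling_error nS nA p k Q \<omega>}"
    using transitions sampling_error_le[OF _ k Q]
    by (intro expectation_le_threshold_plus_tail finite_set_pmf_samples) auto
  also have "\<dots> \<le> u + 2 * B * (1 / real k)"
    using prob_sampling_error_ge_threshold[OF k B Q] B unfolding u_def L_def
    by (intro add_left_mono mult_left_mono) auto
  also have "\<dots> \<le> u + 2 * B / sqrt (real k)"
    using B k real_sqrt_le_iff[of "real k" "real k ^ 2"]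
    by (intro add_left_mono) (simp add: divide_left_mono power2_eq_square)
  also have "\<dots> = B * (sqrt (2 * L) + 2) / sqrt (real k)"
    unfolding u_def by (simp add: real_sqrt_divide add_divide_distrib algebra_simps)
  finally show ?thesis unfolding L_def .
qed

definition sampling_bound :: "nat \<Rightarrow> real" where
  "sampling_bound k = Vmax * (sqrt (2 * ln (2 * real (nS * nA) * real k)) + 2) / sqrt (real k)"

lemma sampling_bound_nonneg:
  assumes "0 < k"
  shows "0 \<le> sampling_bound k"
proof -
  have "1 \<le> real (nS * nA) * real k" using states actions assms by (simp flip: of_nat_mult)
  then show ?thesis unfolding sampling_bound_def using Vmax_nonneg by simp
qed

lemma discounted_sampling_bound_le:
  assumes m: "0 < m" "m \<le> N"
  shows "\<gamma> ^ (N - m) * (real m * sampling_bound (kn \<gamma> N m))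
    \<le> Vmax * (sqrt (2 * ln (2 * real (nS * nA) * real N ^ 2)) + 2) * sqrt \<gamma> ^ (N - m)"
proof -
  define k where "k = kn \<gamma> N m"
  define q where "q = sqrt \<gamma> ^ (N - m)"
  define g where "g = (\<lambda>x. sqrt (2 * ln (2 * real (nS * nA) * x)) + 2)"
  have k: "0 < k" unfolding k_def using kn_pos discount m by simp
  have d: "1 \<le> real (nS * nA)" using states actions by (simp flip: of_nat_mult)
  have q: "0 \<le> q" "\<gamma> ^ (N - m) = q * q"
    unfolding q_def using discount by (simp_all flip: power_mult_distrib)
  have "real k \<le> real (m ^ 2)" unfolding k_def using kn_le_square discount by simp
  also have "\<dots> \<le> real N ^ 2" using m by (simp add: power_mono)
  finally have "2 * real (nS * nA) * real k \<le> 2 * real (nS * nA) * real N ^ 2"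
    using d by (intro mult_left_mono) auto
  then have g_mono: "g (real k) \<le> g (real N ^ 2)"
    unfolding g_def using d k by (simp add: ln_mono)
  have "1 \<le> real (nS * nA) * real k" using states actions k by (simp flip: of_nat_mult)
  then have g_nonneg: "0 \<le> g (real k)" unfolding g_def by simp
  have "real m * q = sqrt (real m ^ 2 * \<gamma> ^ (N - m))"
    unfolding q_def by (simp add: real_sqrt_mult real_sqrt_power)
  also have "\<dots> \<le> sqrt (real k)"
    unfolding k_def using kn_ge discount by simp
  finally have mq: "real m * q / sqrt (real k) \<le> 1" using k by simp
  have "\<gamma> ^ (N - m) * (real m * sampling_bound k) = Vmax * g (real k) * q * (real m * q / sqrt (real k))"
    unfolding sampling_bound_def g_def q(2) by (simp add: algebra_simps add_divide_distrib)
  also have "\<dots> \<le> Vmax * g (real k) * q"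
    using mq Vmax_nonneg g_nonneg q(1) by (intro mult_left_le) auto
  also have "\<dots> \<le> Vmax * g (real N ^ 2) * q"
    using g_mono Vmax_nonneg q(1) by (intro mult_right_mono mult_left_mono) auto
  finally show ?thesis unfolding k_def q_def g_def .
qed

lemma sum_discounted_sampling_bound_le:
  "(\<Sum>m=1..N. \<gamma> ^ (N - m) * (\<gamma> * real m * sampling_bound (kn \<gamma> N m)))
    \<le> Vmax * (sqrt (2 * ln (2 * real (nS * nA) * real N ^ 2)) + 2) * (2 / (1 - \<gamma>))"
proof -
  define G where "G = Vmax * (sqrt (2 * ln (2 * real (nS * nA) * real N ^ 2)) + 2)"
  have G: "0 \<le> G"
  proof (cases "N = 0")
    case False
    then have "1 \<le> real (nS * nA) * real N ^ 2"
      using states actions by (simp flip: of_nat_mult of_nat_power)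
    then show ?thesis unfolding G_def using Vmax_nonneg by simp
  qed (simp add: G_def Vmax_nonneg)
  have "(\<Sum>m=1..N. \<gamma> ^ (N - m) * (\<gamma> * real m * sampling_bound (kn \<gamma> N m)))
      \<le> (\<Sum>m=1..N. G * sqrt \<gamma> ^ (N - m))"
  proof (intro sum_mono)
    fix m assume m: "m \<in> {1..N}"
    have "0 \<le> \<gamma> ^ (N - m) * (real m * sampling_bound (kn \<gamma> N m))"
      using m discount by (simp add: sampling_bound_nonneg kn_pos)
    then have "\<gamma> ^ (N - m) * (\<gamma> * real m * sampling_bound (kn \<gamma> N m))
        \<le> \<gamma> ^ (N - m) * (real m * sampling_bound (kn \<gamma> N m))"
      using discount by (simp add: mult_left_le_one_le algebra_simps)
    also have "\<dots> \<le> G * sqrt \<gamma> ^ (N - m)"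
      unfolding G_def using m by (intro discounted_sampling_bound_le) auto
    finally show "\<gamma> ^ (N - m) * (\<gamma> * real m * sampling_bound (kn \<gamma> N m)) \<le> G * sqrt \<gamma> ^ (N - m)" .
  qed
  also have "\<dots> \<le> G * (2 / (1 - \<gamma>))"
    unfolding sum_distrib_left[symmetric] using G discount sum_sqrt_power_diff_le[of \<gamma> N]
    by (intro mult_left_mono) auto
  finally show ?thesis unfolding G_def .
qed

end

section \<open>The anchored iteration\<close>

locale anchored_qvi = finite_mdp +
  fixes Qs Q0 :: "nat \<Rightarrow> nat \<Rightarrow> real" and N :: nat
  assumes fixpoint: "\<And>s a. s < nS \<Longrightarrow> a < nA \<Longrightarrow> Qs s a = bellman nS nA p r \<gamma> Qs s a"
    and anchor_bounded: "supnorm nS nA Q0 \<le> rmax nS nA r / (1 - \<gamma>)"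
begin

abbreviation iterate :: "nat \<Rightarrow> (nat \<Rightarrow> nat \<Rightarrow> real) pmf" where
  "iterate n \<equiv> alg_iter nS nA p r \<gamma> Q0 N n"

abbreviation err :: "(nat \<Rightarrow> nat \<Rightarrow> real) \<Rightarrow> real" where
  "err Q \<equiv> supnorm nS nA (\<lambda>s a. Q s a - Qs s a)"

abbreviation expected_err :: "nat \<Rightarrow> real" where
  "expected_err n \<equiv> measure_pmf.expectation (iterate n) err"

lemma abs_Qs_le: "s < nS \<Longrightarrow> a < nA \<Longrightarrow> \<bar>Qs s a\<bar> \<le> Vmax"
  using abs_le_supnorm supnorm_fixpoint_le[OF fixpoint] by (meson order_trans)

lemma abs_Q0_le: "s < nS \<Longrightarrow> a < nA \<Longrightarrow> \<bar>Q0 s a\<bar> \<le> Vmax"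
  using abs_le_supnorm anchor_bounded unfolding Vmax_def by (meson order_trans)

lemma err_nonneg: "0 \<le> err Q"
  using supnorm_nonneg[OF states actions] .

lemma err_le:
  assumes "\<And>s a. s < nS \<Longrightarrow> a < nA \<Longrightarrow> \<bar>Q s a\<bar> \<le> Vmax"
  shows "err Q \<le> 2 * Vmax"
  using assms abs_Qs_le by (intro supnorm_le[OF states actions]) (smt (verit))

lemma iterate_bounded:
  "Q \<in> set_pmf (iterate n) \<Longrightarrow> s < nS \<Longrightarrow> a < nA \<Longrightarrow> \<bar>Q s a\<bar> \<le> Vmax"
proof (induction n arbitrary: Q s a)
  case 0
  then show ?case using abs_Q0_le by simp
next
  case (Suc n)
  then obtain Q' \<omega> where "Q' \<in> set_pmf (iterate n)" "\<omega> \<in> set_pmf (samples nS nA p (kn \<gamma> N (Suc n)))"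
    and "Q = alg_update nA r \<gamma> Q0 (Suc n) (kn \<gamma> N (Suc n)) Q' \<omega>"
    by (auto simp: alg_step_eq_map_pmf)
  then show ?case
    using Suc.IH Suc.prems abs_Q0_le kn_pos discount by (auto intro!: abs_alg_update_le)
qed

lemma finite_set_pmf_iterate: "finite (set_pmf (iterate n))"
  using transitions by (induction n) (auto simp: alg_step_eq_map_pmf intro!: finite_set_pmf_samples)

lemma expected_err_step:
  assumes "Q \<in> set_pmf (iterate n)" and Vmax: "0 < Vmax"
  shows "(real n + 2) * measure_pmf.expectation (alg_step nS nA p r \<gamma> Q0 N (Suc n) Q) err
    \<le> err Q0 + \<gamma> * (real n + 1) * (err Q + sampling_bound (kn \<gamma> N (Suc n)))"
proof -
  define k where "k = kn \<gamma> N (Suc n)"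
  have k: "0 < k" unfolding k_def using kn_pos discount by simp
  have fin: "finite (set_pmf (samples nS nA p k))"
    using transitions by (intro finite_set_pmf_samples) auto
  have "(real n + 2) * measure_pmf.expectation (alg_step nS nA p r \<gamma> Q0 N (Suc n) Q) err
      = measure_pmf.expectation (samples nS nA p k) (\<lambda>\<omega>. (real (Suc n) + 1) * err (alg_update nA r \<gamma> Q0 (Suc n) k Q \<omega>))"
    unfolding alg_step_eq_map_pmf k_def by (simp add: add.commute)
  also have "\<dots> \<le> measure_pmf.expectation (samples nS nA p k)
      (\<lambda>\<omega>. (err Q0 + \<gamma> * (real n + 1) * err Q) + \<gamma> * (real n + 1) * sampling_error nS nA p k Q \<omega>)"
  proof (intro expectation_mono_finite_pmf fin)
    fix \<omega>
    have "(real (Suc n) + 1) * err (alg_update nA r \<gamma> Q0 (Suc n) k Q \<omega>)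
        \<le> err Q0 + \<gamma> * real (Suc n) * (err Q + sampling_error nS nA p k Q \<omega>)"
      by (rule alg_update_error[OF fixpoint])
    then show "(real (Suc n) + 1) * err (alg_update nA r \<gamma> Q0 (Suc n) k Q \<omega>)
        \<le> (err Q0 + \<gamma> * (real n + 1) * err Q) + \<gamma> * (real n + 1) * sampling_error nS nA p k Q \<omega>"
      by (simp add: algebra_simps)
  qed
  also have "\<dots> = err Q0 + \<gamma> * (real n + 1) * err Q
      + \<gamma> * (real n + 1) * measure_pmf.expectation (samples nS nA p k) (sampling_error nS nA p k Q)"
    by (rule expectation_affine_finite_pmf[OF fin])
  also have "\<dots> \<le> err Q0 + \<gamma> * (real n + 1) * err Q + \<gamma> * (real n + 1) * sampling_bound k"
    unfolding sampling_bound_def using discount iterate_bounded[OF assms(1)]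
    by (intro add_left_mono mult_left_mono expected_sampling_error_le k Vmax) auto
  finally show ?thesis unfolding k_def by (simp add: algebra_simps)
qed

lemma expected_err_Suc:
  assumes Vmax: "0 < Vmax"
  shows "(real n + 2) * expected_err (Suc n)
    \<le> err Q0 + \<gamma> * (real n + 1) * (expected_err n + sampling_bound (kn \<gamma> N (Suc n)))"
proof -
  let ?\<delta> = "sampling_bound (kn \<gamma> N (Suc n))"
  have "expected_err (Suc n)
      = measure_pmf.expectation (iterate n)
          (\<lambda>Q. measure_pmf.expectation (alg_step nS nA p r \<gamma> Q0 N (Suc n) Q) err)"
    using finite_set_pmf_iterate[of "Suc n"] by (simp add: expectation_bind_pmf_finite_support)
  then have "(real n + 2) * expected_err (Suc n)
      = measure_pmf.expectation (iterate n)
          (\<lambda>Q. (real n + 2) * measure_pmf.expectation (alg_step nS nA p r \<gamma> Q0 N (Suc n) Q) err)"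
    by simp
  also have "\<dots> \<le> measure_pmf.expectation (iterate n) (\<lambda>Q. (err Q0 + \<gamma> * (real n + 1) * ?\<delta>) + \<gamma> * (real n + 1) * err Q)"
    using expected_err_step[OF _ Vmax]
    by (intro expectation_mono_finite_pmf finite_set_pmf_iterate) (simp add: algebra_simps)
  also have "\<dots> = err Q0 + \<gamma> * (real n + 1) * (expected_err n + ?\<delta>)"
    unfolding expectation_affine_finite_pmf[OF finite_set_pmf_iterate] by (simp add: algebra_simps)
  finally show ?thesis .
qed

lemma expected_err_horizon_le:
  assumes Vmax: "0 < Vmax"
  shows "(real N + 1) * expected_err N
    \<le> 2 * Vmax * (3 + sqrt (2 * ln (2 * real (nS * nA) * real N ^ 2))) / (1 - \<gamma>)"
proof -
  have "(real N + 1) * expected_err N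
      \<le> err Q0 / (1 - \<gamma>) + (\<Sum>m=1..N. \<gamma> ^ (N - m) * (\<gamma> * real m * sampling_bound (kn \<gamma> N m)))"
  proof (rule affine_recurrence_le[where x="\<lambda>n. (real n + 1) * expected_err n"])
    show "(real 0 + 1) * expected_err 0 \<le> err Q0 / (1 - \<gamma>)"
      using discount err_nonneg[of Q0] by (simp add: le_divide_eq mult_left_le)
    show "(real (Suc n) + 1) * expected_err (Suc n)
        \<le> err Q0 + \<gamma> * ((real n + 1) * expected_err n) + \<gamma> * real (Suc n) * sampling_bound (kn \<gamma> N (Suc n))" for n
      using expected_err_Suc[OF Vmax, of n] by (simp add: algebra_simps)
  qed (use discount in auto)
  also have "err Q0 / (1 - \<gamma>) \<le> 2 * Vmax / (1 - \<gamma>)"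
    using err_le[OF abs_Q0_le] discount by (simp add: divide_right_mono)
  finally show ?thesis
    using sum_discounted_sampling_bound_le[of N] by (simp add: add_divide_distrib algebra_simps)
qed

lemma expected_err_0_le: "expected_err 0 \<le> 2 * Vmax"
  using err_le[OF abs_Q0_le] by simp

lemma expected_err_le_of_horizon:
  assumes "0 < Vmax"
    and "2 * Vmax * (3 + sqrt (2 * ln (2 * real (nS * nA) * real N ^ 2))) / (1 - \<gamma>) \<le> \<epsilon> * (real N + 1)"
  shows "expected_err N \<le> \<epsilon>"
  using order_trans[OF expected_err_horizon_le[OF assms(1)] assms(2)] by (simp add: mult.commute)

end

section \<open>Choice of the horizon\<close>

lemma sqrt_ln_horizon_le:
  fixes d x Z :: real
  assumes Z: "3 \<le> Z" and d: "0 < d" "d \<le> Z" and x: "0 < x" "x \<le> 60 * Z ^ 4"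
  shows "3 + sqrt (2 * ln (2 * d * x\<^sup>2)) \<le> 9 * ln Z"
proof -
  have "2 * d * x\<^sup>2 \<le> 2 * Z * (60 * Z ^ 4)\<^sup>2"
    using d x by (intro mult_mono power_mono) auto
  also have "\<dots> = 7200 * Z ^ 9"
    by (simp add: power_mult_distrib flip: power_mult power_Suc)
  also have "\<dots> \<le> Z ^ 9 * Z ^ 9"
  proof (rule mult_right_mono)
    have "(3::real) ^ 9 \<le> Z ^ 9" using Z by (intro power_mono) auto
    then show "7200 \<le> Z ^ 9" by simp
  qed (use Z in simp)
  also have "\<dots> = Z ^ 18" by (simp flip: power_add)
  finally have "ln (2 * d * x\<^sup>2) \<le> ln (Z ^ 18)"
    using d x by (intro ln_mono) auto
  also have "\<dots> = 18 * ln Z" using Z by (simp add: ln_realpow)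
  finally have "sqrt (2 * ln (2 * d * x\<^sup>2)) \<le> sqrt (6\<^sup>2 * ln Z)"
    by (intro real_sqrt_le_mono) simp
  also have "\<dots> = 6 * sqrt (ln Z)" by (simp add: real_sqrt_mult)
  finally have "sqrt (2 * ln (2 * d * x\<^sup>2)) \<le> 6 * sqrt (ln Z)" .
  moreover have "1 \<le> ln Z" using Z exp_le by (simp add: ln_ge_iff)
  then have "sqrt (ln Z) \<le> ln Z" by (simp add: real_sqrt_le_iff' power2_eq_square)
  ultimately show ?thesis using \<open>1 \<le> ln Z\<close> by linarith
qed

lemma horizon_scale_bounds:
  fixes R \<gamma> \<epsilon> Z :: real
  assumes \<gamma>: "0 < \<gamma>" "\<gamma> < 1" and \<epsilon>: "0 < \<epsilon>" and R: "0 < R" "R \<le> 1"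
    and small: "\<epsilon> < 2 * (R / (1 - \<gamma>))" and Z: "1 / \<epsilon> \<le> Z" "1 / (1 - \<gamma>) \<le> Z"
  shows "1 / 2 < R / ((1 - \<gamma>)\<^sup>2 * \<epsilon>)" "R / ((1 - \<gamma>)\<^sup>2 * \<epsilon>) \<le> Z ^ 3"
proof -
  have w: "0 < 1 - \<gamma>" "1 \<le> 1 / (1 - \<gamma>)" using \<gamma> by (auto simp: field_simps)
  have split: "R / ((1 - \<gamma>)\<^sup>2 * \<epsilon>) = R / (1 - \<gamma>) * (1 / (1 - \<gamma>)) * (1 / \<epsilon>)"
    by (simp add: power2_eq_square)
  have "1 / 2 < R / (1 - \<gamma>) * (1 / \<epsilon>)" using small \<epsilon> w by (simp add: field_simps)
  also have "\<dots> \<le> R / (1 - \<gamma>) * (1 / (1 - \<gamma>)) * (1 / \<epsilon>)"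
    using mult_left_mono[OF w(2), of "R / (1 - \<gamma>)"] R w \<epsilon> by (intro mult_right_mono) auto
  finally show "1 / 2 < R / ((1 - \<gamma>)\<^sup>2 * \<epsilon>)" unfolding split .
  have RZ: "R / (1 - \<gamma>) \<le> Z"
    using divide_right_mono[OF R(2), of "1 - \<gamma>"] w Z(2) by simp
  have Z0: "0 \<le> Z" using Z(2) w(2) by linarith
  have "R / (1 - \<gamma>) * (1 / (1 - \<gamma>)) \<le> Z * Z"
    by (rule mult_mono[OF RZ Z(2) Z0]) (use w in simp)
  then have "R / (1 - \<gamma>) * (1 / (1 - \<gamma>)) * (1 / \<epsilon>) \<le> Z * Z * Z"
    by (rule mult_mono[OF _ Z(1)]) (use Z0 \<epsilon> in auto)
  then show "R / ((1 - \<gamma>)\<^sup>2 * \<epsilon>) \<le> Z ^ 3" unfolding split by (simp add: power3_eq_cube)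
qed

text \<open>The horizon \<open>N \<approx> 30 R L / ((1 - \<gamma>)\<^sup>2 \<epsilon>)\<close>, with \<open>L\<close> the logarithmic factor of the
  statement, makes the error bound \<open>2 Vmax (3 + sqrt (2 ln (2 |S \<times> A| N\<^sup>2))) / ((1 - \<gamma>) (N + 1))\<close>
  at most \<open>\<epsilon>\<close>, while the \<open>2 |S \<times> A| N\<^sup>2 / (1 - \<gamma>)\<close> queries stay within the claimed budget.\<close>

lemma horizon_exists:
  fixes d R \<gamma> \<epsilon> :: real
  assumes d: "1 \<le> d" and \<gamma>: "0 < \<gamma>" "\<gamma> < 1" and \<epsilon>: "0 < \<epsilon>" and R: "0 < R" "R \<le> 1"
    and small: "\<epsilon> < 2 * (R / (1 - \<gamma>))"
  defines "L \<equiv> ln (2 + d + 1 / \<epsilon> + 1 / (1 - \<gamma>))"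
  shows "\<exists>N::nat. 2 * d * real N ^ 2 / (1 - \<gamma>) \<le> 7200 * d * R ^ 2 / (\<epsilon> ^ 2 * (1 - \<gamma>) ^ 5) * L ^ 2
    \<and> 2 * (R / (1 - \<gamma>)) * (3 + sqrt (2 * ln (2 * d * real N ^ 2))) / (1 - \<gamma>) \<le> \<epsilon> * (real N + 1)"
proof -
  define Z where "Z = 2 + d + 1 / \<epsilon> + 1 / (1 - \<gamma>)"
  define Y where "Y = R / ((1 - \<gamma>)\<^sup>2 * \<epsilon>)"
  define N where "N = nat \<lceil>30 * Y * L\<rceil>"
  have w: "0 < 1 - \<gamma>" "1 \<le> 1 / (1 - \<gamma>)" using \<gamma> by (auto simp: field_simps)
  have "0 < 1 / \<epsilon>" using \<epsilon> by simp
  then have Z: "3 \<le> Z" "d \<le> Z" "1 / \<epsilon> \<le> Z" "1 / (1 - \<gamma>) \<le> Z"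
    unfolding Z_def using d w by linarith+
  have L: "1 \<le> L" "L \<le> Z"
    unfolding L_def Z_def[symmetric] using Z(1) exp_le by (auto simp: ln_ge_iff intro: ln_bound)
  have Y: "1 / 2 < Y" "Y \<le> Z ^ 3"
    unfolding Y_def using horizon_scale_bounds[OF \<gamma> \<epsilon> R small Z(3,4)] by auto
  have X: "15 \<le> 30 * Y * L" using Y(1) L(1) mult_mono[of "1/2" Y 1 L] by linarith
  then have N: "30 * Y * L \<le> real N" "real N \<le> 60 * Y * L" unfolding N_def by linarith+
  show ?thesis
  proof (intro exI[of _ N] conjI)
    have "2 * d * real N ^ 2 / (1 - \<gamma>) \<le> 2 * d * (60 * Y * L) ^ 2 / (1 - \<gamma>)"
      using N d w by (intro divide_right_mono mult_left_mono power_mono) auto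
    also have "\<dots> = 7200 * d * R ^ 2 / (\<epsilon> ^ 2 * (1 - \<gamma>) ^ 5) * L ^ 2"
      unfolding Y_def using w \<epsilon> by (simp add: field_simps power2_eq_square eval_nat_numeral)
    finally show "2 * d * real N ^ 2 / (1 - \<gamma>) \<le> 7200 * d * R ^ 2 / (\<epsilon> ^ 2 * (1 - \<gamma>) ^ 5) * L ^ 2" .
  next
    have "Y * L \<le> Z ^ 3 * Z" using Y L by (intro mult_mono) auto
    then have "real N \<le> 60 * Z ^ 4" using N by (simp add: eval_nat_numeral)
    moreover have "0 < real N" using N X by linarith
    ultimately have log_factor: "3 + sqrt (2 * ln (2 * d * real N ^ 2)) \<le> 9 * L"
      unfolding L_def Z_def[symmetric] using Z d by (intro sqrt_ln_horizon_le) auto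
    have "2 * (R / v) * x / v = \<epsilon> * (2 * (R / (v\<^sup>2 * \<epsilon>)) * x)" if "0 < v" for v x
      using that \<epsilon> by (simp add: field_simps power2_eq_square)
    then have "2 * (R / (1 - \<gamma>)) * (3 + sqrt (2 * ln (2 * d * real N ^ 2))) / (1 - \<gamma>)
        = \<epsilon> * (2 * Y * (3 + sqrt (2 * ln (2 * d * real N ^ 2))))"
      unfolding Y_def using w by blast
    also have "\<dots> \<le> \<epsilon> * (2 * Y * (9 * L))"
      using log_factor Y \<epsilon> by (intro mult_left_mono) auto
    also have "\<dots> \<le> \<epsilon> * (real N + 1)"
      using N Y L \<epsilon> by (intro mult_left_mono) auto
    finally show "2 * (R / (1 - \<gamma>)) * (3 + sqrt (2 * ln (2 * d * real N ^ 2))) / (1 - \<gamma>) \<le> \<epsilon> * (real N + 1)" .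
  qed
qed

definition accurate_horizon :: "nat \<Rightarrow> nat \<Rightarrow> (nat \<Rightarrow> nat \<Rightarrow> real) \<Rightarrow> real \<Rightarrow> real \<Rightarrow> nat \<Rightarrow> bool" where
  "accurate_horizon nS nA r \<gamma> \<epsilon> N \<longleftrightarrow>
     (\<forall>(p :: nat \<Rightarrow> nat \<Rightarrow> nat pmf) Qs Q0.
        (\<forall>s<nS. \<forall>a<nA. set_pmf (p s a) \<subseteq> {..<nS}) \<and>
        (\<forall>s<nS. \<forall>a<nA. Qs s a = bellman nS nA p r \<gamma> Qs s a) \<and>
        supnorm nS nA Q0 \<le> rmax nS nA r / (1 - \<gamma>) \<longrightarrow>
        measure_pmf.expectation (alg_iter nS nA p r \<gamma> Q0 N N)
          (\<lambda>Q. supnorm nS nA (\<lambda>s a. Q s a - Qs s a)) \<le> \<epsilon>)"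

lemma accurate_horizonI:
  assumes "1 \<le> nS" "1 \<le> nA" "0 < \<gamma>" "\<gamma> < 1" "\<forall>s<nS. \<forall>a<nA. 0 \<le> r s a \<and> r s a \<le> 1"
    and "\<And>p Qs Q0. anchored_qvi nS nA p r \<gamma> Qs Q0 \<Longrightarrow>
      measure_pmf.expectation (alg_iter nS nA p r \<gamma> Q0 N N) (\<lambda>Q. supnorm nS nA (\<lambda>s a. Q s a - Qs s a)) \<le> \<epsilon>"
  shows "accurate_horizon nS nA r \<gamma> \<epsilon> N"
  unfolding accurate_horizon_def
proof (intro allI impI)
  fix p Qs Q0 assume "(\<forall>s<nS. \<forall>a<nA. set_pmf (p s a) \<subseteq> {..<nS}) \<and>
    (\<forall>s<nS. \<forall>a<nA. Qs s a = bellman nS nA p r \<gamma> Qs s a) \<and> supnorm nS nA Q0 \<le> rmax nS nA r / (1 - \<gamma>)"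
  then have "anchored_qvi nS nA p r \<gamma> Qs Q0"
    using assms(1-5) by unfold_locales auto
  then show "measure_pmf.expectation (alg_iter nS nA p r \<gamma> Q0 N N)
      (\<lambda>Q. supnorm nS nA (\<lambda>s a. Q s a - Qs s a)) \<le> \<epsilon>" by (rule assms(6))
qed

lemma accurate_horizon_0:
  assumes "1 \<le> nS" "1 \<le> nA" "0 < \<gamma>" "\<gamma> < 1" "\<forall>s<nS. \<forall>a<nA. 0 \<le> r s a \<and> r s a \<le> 1"
    and "2 * (rmax nS nA r / (1 - \<gamma>)) \<le> \<epsilon>"
  shows "accurate_horizon nS nA r \<gamma> \<epsilon> 0"
proof (rule accurate_horizonI[OF assms(1-5)])
  fix p Qs Q0 assume "anchored_qvi nS nA p r \<gamma> Qs Q0"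
  then interpret anchored_qvi nS nA p r \<gamma> Qs Q0 0 .
  show "expected_err 0 \<le> \<epsilon>" using expected_err_0_le assms(6) unfolding Vmax_def by simp
qed

lemma accurate_horizon_of_bound:
  assumes "1 \<le> nS" "1 \<le> nA" "0 < \<gamma>" "\<gamma> < 1" "\<forall>s<nS. \<forall>a<nA. 0 \<le> r s a \<and> r s a \<le> 1"
    and "0 < rmax nS nA r"
    and "2 * (rmax nS nA r / (1 - \<gamma>)) * (3 + sqrt (2 * ln (2 * real (nS * nA) * real N ^ 2))) / (1 - \<gamma>)
      \<le> \<epsilon> * (real N + 1)"
  shows "accurate_horizon nS nA r \<gamma> \<epsilon> N"
proof (rule accurate_horizonI[OF assms(1-5)])
  fix p Qs Q0 assume "anchored_qvi nS nA p r \<gamma> Qs Q0"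
  then interpret anchored_qvi nS nA p r \<gamma> Qs Q0 N .
  have "Vmax = rmax nS nA r / (1 - \<gamma>)" by (fact Vmax_def)
  then show "expected_err N \<le> \<epsilon>"
    using assms(4,6,7) by (intro expected_err_le_of_horizon) auto
qed

lemma accurate_horizon_exists:
  fixes nS nA :: nat and r :: "nat \<Rightarrow> nat \<Rightarrow> real" and \<gamma> \<epsilon> :: real
  assumes nS: "1 \<le> nS" and nA: "1 \<le> nA" and \<gamma>: "0 < \<gamma>" "\<gamma> < 1" and \<epsilon>: "0 < \<epsilon>"
    and r: "\<forall>s<nS. \<forall>a<nA. 0 \<le> r s a \<and> r s a \<le> 1"
  shows "\<exists>N. real (queries nS nA \<gamma> N)
      \<le> 7200 * real (nS * nA) * rmax nS nA r ^ 2 / (\<epsilon> ^ 2 * (1 - \<gamma>) ^ 5)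
         * ln (2 + real (nS * nA) + 1 / \<epsilon> + 1 / (1 - \<gamma>)) ^ 2
    \<and> accurate_horizon nS nA r \<gamma> \<epsilon> N"
proof -
  define R where "R = rmax nS nA r"
  define d where "d = real (nS * nA)"
  have d: "1 \<le> d" unfolding d_def using nS nA by (simp flip: of_nat_mult)
  have "0 \<le> r 0 0" using r nS nA by simp
  also have "r 0 0 \<le> R" unfolding R_def using nS nA by (intro rmax_ge) auto
  finally have R: "0 \<le> R" "R \<le> 1"
    unfolding R_def using r nS nA by (auto intro: rmax_le)
  show ?thesis
  proof (cases "2 * (R / (1 - \<gamma>)) \<le> \<epsilon>")
    case True
    then show ?thesis
      using accurate_horizon_0[OF nS nA \<gamma> r] \<epsilon> \<gamma> unfolding R_def
      by (intro exI[of _ 0]) (simp add: queries_def)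
  next
    case False
    then have small: "\<epsilon> < 2 * (R / (1 - \<gamma>))" by simp
    then have R_pos: "0 < R" using R(1) \<epsilon> by (cases "R = 0") auto
    obtain N where N_queries: "2 * d * real N ^ 2 / (1 - \<gamma>) \<le> 7200 * d * R ^ 2 / (\<epsilon> ^ 2 * (1 - \<gamma>) ^ 5)
          * ln (2 + d + 1 / \<epsilon> + 1 / (1 - \<gamma>)) ^ 2"
      and N_accurate: "2 * (R / (1 - \<gamma>)) * (3 + sqrt (2 * ln (2 * d * real N ^ 2))) / (1 - \<gamma>) \<le> \<epsilon> * (real N + 1)"
      using horizon_exists[OF d \<gamma> \<epsilon> R_pos R(2) small] by blast
    show ?thesis
    proof (intro exI[of _ N] conjI)
      show "real (queries nS nA \<gamma> N) \<le> 7200 * real (nS * nA) * rmax nS nA r ^ 2 / (\<epsilon> ^ 2 * (1 - \<gamma>) ^ 5)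
          * ln (2 + real (nS * nA) + 1 / \<epsilon> + 1 / (1 - \<gamma>)) ^ 2"
        using order_trans[OF queries_le[OF \<gamma>, of nS nA N] N_queries[unfolded d_def]] unfolding R_def .
      show "accurate_horizon nS nA r \<gamma> \<epsilon> N"
        using N_accurate R_pos unfolding R_def d_def by (intro accurate_horizon_of_bound nS nA \<gamma> r)
    qed
  qed
qed

theorem theorem6:
  "\<exists>C::real. \<exists>m::nat. \<forall>nS nA (r :: nat \<Rightarrow> nat \<Rightarrow> real) (\<gamma>::real) (\<epsilon>::real).
     nS \<ge> 1 \<and> nA \<ge> 1 \<and> 0 < \<gamma> \<and> \<gamma> < 1 \<and> \<epsilon> > 0 \<and>
     (\<forall>s<nS. \<forall>a<nA. 0 \<le> r s a \<and> r s a \<le> 1) \<longrightarrow>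
     (\<exists>N::nat.
        real (queries nS nA \<gamma> N)
          \<le> C * real (nS * nA) * rmax nS nA r ^ 2 / (\<epsilon> ^ 2 * (1 - \<gamma>) ^ 5)
             * ln (2 + real (nS * nA) + 1 / \<epsilon> + 1 / (1 - \<gamma>)) ^ m
      \<and> (\<forall>(p :: nat \<Rightarrow> nat \<Rightarrow> nat pmf) Qs Q0.
           (\<forall>s<nS. \<forall>a<nA. set_pmf (p s a) \<subseteq> {..<nS}) \<and>
           (\<forall>s<nS. \<forall>a<nA. Qs s a = bellman nS nA p r \<gamma> Qs s a) \<and>
           supnorm nS nA Q0 \<le> rmax nS nA r / (1 - \<gamma>) \<longrightarrow>
           measure_pmf.expectation (alg_iter nS nA p r \<gamma> Q0 N N)
              (\<lambda>Q. supnorm nS nA (\<lambda>s a. Q s a - Qs s a)) \<le> \<epsilon>))"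
  by (rule exI[of _ 7200], rule exI[of _ 2], intro allI impI, elim conjE)
    (rule accurate_horizon_exists[unfolded accurate_horizon_def])

end
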